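(* Let $G$ be an amenable group with finitely additive left-invariant mean $\mu$, let $X\subset G$ be a symmetric subset containing the identity, and let $m\in\mathbb{N}$. Suppose $\mu(X)\ge\frac{1}{m}$. Then the subgroup $\langle X\rangle$ generated by $X$ equals $X^{3m-1}$.
   Context: A finitely additive left-invariant mean is a positive linear functional $\int\cdot\,d\mu$ on $\ell^\infty(G)$ with $\int1_G\,d\mu=1$ and $\int f(g^{-1}\cdot)\,d\mu=\int f\,d\mu$; $\mu(X)=\int1_X\,d\mu$. $X^k$ is the set of products of $k$ elements of $X$. *)

theory Defs
  imports Complex_Main "HOL-Algebra.Generated_Groups"
begin

definition linf :: "('a, 'b) monoid_scheme \<Rightarrow> ('a \<Rightarrow> real) set" where
  "linf G = {f. \<exists>C. \<forall>x\<in>carrier G. \<bar>f x\<bar> \<le> C}"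

definition left_invariant_mean :: "('a, 'b) monoid_scheme \<Rightarrow> (('a \<Rightarrow> real) \<Rightarrow> real) \<Rightarrow> bool" where
  "left_invariant_mean G \<mu> \<longleftrightarrow>
     (\<forall>f\<in>linf G. \<forall>g\<in>linf G. \<mu> (\<lambda>x. f x + g x) = \<mu> f + \<mu> g) \<and>
     (\<forall>f\<in>linf G. \<forall>c. \<mu> (\<lambda>x. c * f x) = c * \<mu> f) \<and>
     (\<forall>f\<in>linf G. (\<forall>x\<in>carrier G. 0 \<le> f x) \<longrightarrow> 0 \<le> \<mu> f) \<and>
     \<mu> (\<lambda>_. 1) = 1 \<and>
     (\<forall>f\<in>linf G. \<forall>g\<in>carrier G. \<mu> (\<lambda>x. f (inv\<^bsub>G\<^esub> g \<otimes>\<^bsub>G\<^esub> x)) = \<mu> f)"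

definition mean_measure :: "(('a \<Rightarrow> real) \<Rightarrow> real) \<Rightarrow> 'a set \<Rightarrow> real" where
  "mean_measure \<mu> X = \<mu> (\<lambda>x. if x \<in> X then 1 else 0)"

fun set_pow :: "('a, 'b) monoid_scheme \<Rightarrow> 'a set \<Rightarrow> nat \<Rightarrow> 'a set" where
  "set_pow G X 0 = {\<one>\<^bsub>G\<^esub>}"
| "set_pow G X (Suc k) = {x \<otimes>\<^bsub>G\<^esub> y | x y. x \<in> X \<and> y \<in> set_pow G X k}"

end

theory Submission
  imports Defs
begin

text \<open>If \<open>X\<^bsup>3m-1\<^esup>\<close> were not yet the whole generated subgroup, the powers of \<open>X\<close> would grow
  strictly at every step up to \<open>3m\<close>, so we could pick \<open>g\<^sub>j \<in> X\<^bsup>3j\<^esup> - X\<^bsup>3j-1\<^esup>\<close> for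
  \<open>j = 0, \<dots>, m\<close>. The translates \<open>g\<^sub>j X\<close> are pairwise disjoint: \<open>g\<^sub>i a = g\<^sub>j b\<close> with \<open>i < j\<close>
  would put \<open>g\<^sub>j = g\<^sub>i a b\<^sup>-\<^sup>1\<close> into \<open>X\<^bsup>3i+2\<^esup> \<subseteq> X\<^bsup>3j-1\<^esup>\<close>. By invariance each translate has
  mean at least \<open>1/m\<close>, so \<open>m + 1\<close> disjoint ones would have total mean above \<open>1\<close>.\<close>

context group
begin

lemma set_pow_closed: "X \<subseteq> carrier G \<Longrightarrow> set_pow G X k \<subseteq> carrier G"
  by (induction k) auto

lemma mem_set_pow_1: "X \<subseteq> carrier G \<Longrightarrow> x \<in> X \<Longrightarrow> x \<in> set_pow G X 1"
  by force

lemma set_pow_Suc_mono: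
  assumes "\<one> \<in> X" shows "set_pow G X k \<subseteq> set_pow G X (Suc k)"
proof (induction k)
  case 0
  then show ?case using assms by force
next
  case (Suc k)
  then show ?case by fastforce
qed

lemma set_pow_mono:
  assumes "\<one> \<in> X" "k \<le> l" shows "set_pow G X k \<subseteq> set_pow G X l"
  using assms(2)
proof (induction l rule: dec_induct)
  case (step n)
  then show ?case using set_pow_Suc_mono[OF assms(1), of n] by blast
qed simp

lemma set_pow_add_mem:
  assumes "X \<subseteq> carrier G" "a \<in> set_pow G X i" "b \<in> set_pow G X j"
  shows "a \<otimes> b \<in> set_pow G X (i + j)"
  using assms(2)
proof (induction i arbitrary: a)
  case 0
  have "b \<in> carrier G" using assms(1,3) set_pow_closed by blast
  with 0 show ?case using assms(3) by simp
next
  case (Suc i)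
  then obtain x y where xy: "a = x \<otimes> y" "x \<in> X" "y \<in> set_pow G X i" by auto
  have "a \<otimes> b = x \<otimes> (y \<otimes> b)"
    using xy assms set_pow_closed[OF assms(1)] by (auto intro!: m_assoc)
  moreover have "y \<otimes> b \<in> set_pow G X (i + j)" using Suc.IH xy(3) .
  ultimately show ?case using xy(2) by auto
qed

lemma set_pow_subset_generate: "X \<subseteq> carrier G \<Longrightarrow> set_pow G X k \<subseteq> generate G X"
  by (induction k) (auto intro: generate.one generate.eng generate.incl)

lemma generate_subset_UN_set_pow:
  assumes "X \<subseteq> carrier G" "\<forall>x\<in>X. inv x \<in> X"
  shows "generate G X \<subseteq> (\<Union>k. set_pow G X k)"
proof
  fix z assume "z \<in> generate G X"
  then show "z \<in> (\<Union>k. set_pow G X k)"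
  proof (induction rule: generate.induct)
    case one
    have "\<one> \<in> set_pow G X 0" by simp
    then show ?case by blast
  next
    case (incl h)
    then show ?case using mem_set_pow_1 assms(1) by blast
  next
    case (inv h)
    then show ?case using mem_set_pow_1 assms by blast
  next
    case (eng h1 h2)
    then show ?case using set_pow_add_mem assms(1) by blast
  qed
qed

lemma set_pow_stable:
  assumes "set_pow G X k = set_pow G X (Suc k)"
  shows "set_pow G X (k + d) = set_pow G X k"
proof (induction d)
  case 0
  then show ?case by simp
next
  case (Suc d)
  have "set_pow G X (k + Suc d) = set_pow G X (Suc (k + d))" by simp
  also have "\<dots> = set_pow G X (Suc k)" using Suc.IH by (simp only: set_pow.simps)
  also have "\<dots> = set_pow G X k" using assms by (rule sym)
  finally show ?case .
qed

lemma generate_eq_set_pow_if_stable: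
  assumes "X \<subseteq> carrier G" "\<forall>x\<in>X. inv x \<in> X" "\<one> \<in> X"
    and "set_pow G X k = set_pow G X (Suc k)"
  shows "generate G X = set_pow G X k"
proof
  show "generate G X \<subseteq> set_pow G X k"
  proof
    fix z assume "z \<in> generate G X"
    then have "z \<in> (\<Union>l. set_pow G X l)" using generate_subset_UN_set_pow[OF assms(1,2)] ..
    then obtain l where "z \<in> set_pow G X l" by blast
    moreover have "set_pow G X l \<subseteq> set_pow G X k"
    proof (cases "l \<le> k")
      case True
      then show ?thesis by (rule set_pow_mono[OF assms(3)])
    next
      case False
      then obtain d where "l = k + d" using le_Suc_ex[of k l] by auto
      then show ?thesis using set_pow_stable[OF assms(4)] by simp
    qed
    ultimately show "z \<in> set_pow G X k" by blast
  qed
  show "set_pow G X k \<subseteq> generate G X" using set_pow_subset_generate assms(1) .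
qed

lemma set_pow_strict_mono_below:
  assumes "\<one> \<in> X" "set_pow G X k \<noteq> set_pow G X (Suc k)" "j \<le> k"
  shows "set_pow G X j \<subset> set_pow G X (Suc j)"
proof -
  have "set_pow G X j \<noteq> set_pow G X (Suc j)"
  proof
    assume stable: "set_pow G X j = set_pow G X (Suc j)"
    have "set_pow G X k = set_pow G X j"
      using set_pow_stable[OF stable, of "k - j"] assms(3) by simp
    moreover have "set_pow G X (Suc k) = set_pow G X j"
      using set_pow_stable[OF stable, of "Suc k - j"] assms(3) by simp
    ultimately show False using assms(2) by simp
  qed
  with set_pow_Suc_mono[OF assms(1)] show ?thesis by blast
qed

lemma left_translates_disjoint:
  assumes "X \<subseteq> carrier G" "\<forall>x\<in>X. inv x \<in> X" "\<one> \<in> X"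
    and "i < j" "gi \<in> set_pow G X (3 * i)" "gj \<in> carrier G" "gj \<notin> set_pow G X (3 * j - 1)"
  shows "{x. inv gi \<otimes> x \<in> X} \<inter> {x. inv gj \<otimes> x \<in> X} \<inter> carrier G = {}"
proof (rule ccontr)
  assume "{x. inv gi \<otimes> x \<in> X} \<inter> {x. inv gj \<otimes> x \<in> X} \<inter> carrier G \<noteq> {}"
  then obtain x where x: "x \<in> carrier G" "inv gi \<otimes> x \<in> X" "inv gj \<otimes> x \<in> X" by blast
  define a b where "a = inv gi \<otimes> x" and "b = inv gj \<otimes> x"
  have gi: "gi \<in> carrier G" using assms(1,5) set_pow_closed by blast
  have "gj = x \<otimes> inv b"
    using gi assms(6) x(1) by (simp add: b_def inv_mult_group m_assoc[symmetric])
  moreover have "x = gi \<otimes> a"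
    using gi x(1) by (simp add: a_def m_assoc[symmetric])
  moreover have "a \<in> carrier G" "b \<in> carrier G" using assms(1) x a_def b_def by auto
  ultimately have gj_eq: "gj = gi \<otimes> (a \<otimes> inv b)" using gi by (simp add: m_assoc)
  have "a \<otimes> inv b \<in> set_pow G X (1 + 1)"
    using set_pow_add_mem mem_set_pow_1 assms(1,2) x a_def b_def by blast
  then have "gj \<in> set_pow G X (3 * i + (1 + 1))"
    unfolding gj_eq by (rule set_pow_add_mem[OF assms(1,5)])
  moreover have "3 * i + (1 + 1) \<le> 3 * j - 1" using assms(4) by simp
  ultimately show False using set_pow_mono[OF assms(3)] assms(7) by blast
qed

lemma set_pow_escaping_elements:
  assumes "\<one> \<in> X" "set_pow G X (3 * m - 1) \<noteq> set_pow G X (Suc (3 * m - 1))"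
  obtains g where "\<And>j. j \<le> m \<Longrightarrow> g j \<in> set_pow G X (3 * j)"
    and "\<And>j. 0 < j \<Longrightarrow> j \<le> m \<Longrightarrow> g j \<notin> set_pow G X (3 * j - 1)"
proof -
  have "\<exists>y. y \<in> set_pow G X (3 * j) \<and> (0 < j \<longrightarrow> y \<notin> set_pow G X (3 * j - 1))"
    if "j \<le> m" for j
  proof (cases "j = 0")
    case False
    then have "set_pow G X (3 * j - 1) \<subset> set_pow G X (Suc (3 * j - 1))"
      using that by (intro set_pow_strict_mono_below[OF assms]) simp
    moreover have "Suc (3 * j - 1) = 3 * j" using False by simp
    ultimately show ?thesis by auto
  qed simp
  then have "\<forall>j\<in>{..m}. \<exists>y. y \<in> set_pow G X (3 * j) \<and> (0 < j \<longrightarrow> y \<notin> set_pow G X (3 * j - 1))"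
    by simp
  from bchoice[OF this] obtain g
    where "\<forall>j\<in>{..m}. g j \<in> set_pow G X (3 * j) \<and> (0 < j \<longrightarrow> g j \<notin> set_pow G X (3 * j - 1))" ..
  then show thesis by (intro that) auto
qed

lemma escaping_left_translates_disjoint:
  assumes "X \<subseteq> carrier G" "\<forall>x\<in>X. inv x \<in> X" "\<one> \<in> X"
    and g: "\<And>j. j \<le> m \<Longrightarrow> g j \<in> set_pow G X (3 * j)"
    and g_new: "\<And>j. 0 < j \<Longrightarrow> j \<le> m \<Longrightarrow> g j \<notin> set_pow G X (3 * j - 1)"
    and "i \<le> m" "j \<le> m" "i \<noteq> j"
  shows "{x. inv (g i) \<otimes> x \<in> X} \<inter> {x. inv (g j) \<otimes> x \<in> X} \<inter> carrier G = {}"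
proof -
  have ordered: "{x. inv (g k) \<otimes> x \<in> X} \<inter> {x. inv (g l) \<otimes> x \<in> X} \<inter> carrier G = {}"
    if "k < l" "l \<le> m" for k l
  proof (rule left_translates_disjoint[OF assms(1-3) that(1)])
    show "g k \<in> set_pow G X (3 * k)" using g that by simp
    show "g l \<in> carrier G" using g[OF that(2)] set_pow_closed[OF assms(1)] by blast
    show "g l \<notin> set_pow G X (3 * l - 1)" using g_new that by simp
  qed
  show ?thesis
  proof (cases "i < j")
    case True
    then show ?thesis by (rule ordered[OF _ assms(7)])
  next
    case False
    then have "j < i" using assms(8) by simp
    have "{x. inv (g i) \<otimes> x \<in> X} \<inter> {x. inv (g j) \<otimes> x \<in> X}
      = {x. inv (g j) \<otimes> x \<in> X} \<inter> {x. inv (g i) \<otimes> x \<in> X}" by (rule Int_commute)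
    with ordered[OF \<open>j < i\<close> assms(6)] show ?thesis by (simp only:)
  qed
qed

end

lemma linf_add:
  assumes "f \<in> linf G" "g \<in> linf G" shows "(\<lambda>x. f x + g x) \<in> linf G"
proof -
  obtain C D where "\<forall>x\<in>carrier G. \<bar>f x\<bar> \<le> C" "\<forall>x\<in>carrier G. \<bar>g x\<bar> \<le> D"
    using assms unfolding linf_def by blast
  then have "\<forall>x\<in>carrier G. \<bar>f x + g x\<bar> \<le> C + D" by (smt (verit))
  then show ?thesis unfolding linf_def by blast
qed

lemma linf_scale:
  assumes "f \<in> linf G" shows "(\<lambda>x. c * f x) \<in> linf G"
proof -
  obtain C where "\<forall>x\<in>carrier G. \<bar>f x\<bar> \<le> C" using assms unfolding linf_def by blast
  then have "\<forall>x\<in>carrier G. \<bar>c * f x\<bar> \<le> \<bar>c\<bar> * C" by (simp add: abs_mult mult_left_mono)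
  then show ?thesis unfolding linf_def by blast
qed

lemma linf_sum: "finite S \<Longrightarrow> (\<And>j. j \<in> S \<Longrightarrow> f j \<in> linf G) \<Longrightarrow> (\<lambda>x. \<Sum>j\<in>S. f j x) \<in> linf G"
proof (induction S rule: finite_induct)
  case empty
  show ?case unfolding linf_def by (intro CollectI exI[of _ 0]) simp
next
  case (insert a S)
  then show ?case by (simp add: linf_add)
qed

lemma linf_const: "(\<lambda>_. c) \<in> linf G"
  unfolding linf_def by (intro CollectI exI[of _ "\<bar>c\<bar>"]) simp

lemma linf_indicator: "(\<lambda>x. if x \<in> A then 1 else 0) \<in> linf G"
  unfolding linf_def by (rule CollectI, rule exI[of _ 1]) simp

context
  fixes G (structure) and \<mu> :: "('a \<Rightarrow> real) \<Rightarrow> real"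
  assumes mean: "left_invariant_mean G \<mu>"
begin

lemma mean_add: "f \<in> linf G \<Longrightarrow> g \<in> linf G \<Longrightarrow> \<mu> (\<lambda>x. f x + g x) = \<mu> f + \<mu> g"
  using mean unfolding left_invariant_mean_def by blast

lemma mean_scale: "f \<in> linf G \<Longrightarrow> \<mu> (\<lambda>x. c * f x) = c * \<mu> f"
  using mean unfolding left_invariant_mean_def by blast

lemma mean_nonneg: "f \<in> linf G \<Longrightarrow> (\<And>x. x \<in> carrier G \<Longrightarrow> 0 \<le> f x) \<Longrightarrow> 0 \<le> \<mu> f"
  using mean unfolding left_invariant_mean_def by blast

lemma mean_one: "\<mu> (\<lambda>_. 1) = 1"
  using mean unfolding left_invariant_mean_def by blast

lemma mean_left_translate: "f \<in> linf G \<Longrightarrow> g \<in> carrier G \<Longrightarrow> \<mu> (\<lambda>x. f (inv g \<otimes> x)) = \<mu> f"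
  using mean unfolding left_invariant_mean_def by blast

lemma mean_mono:
  assumes "f \<in> linf G" "g \<in> linf G" "\<And>x. x \<in> carrier G \<Longrightarrow> f x \<le> g x"
  shows "\<mu> f \<le> \<mu> g"
proof -
  have "0 \<le> \<mu> (\<lambda>x. g x + -1 * f x)"
    using assms by (intro mean_nonneg linf_add linf_scale) auto
  also have "\<dots> = \<mu> g + \<mu> (\<lambda>x. -1 * f x)"
    by (rule mean_add[OF assms(2) linf_scale[OF assms(1)]])
  also have "\<dots> = \<mu> g - \<mu> f"
    using mean_scale[OF assms(1), of "-1"] by simp
  finally show ?thesis by simp
qed

lemma mean_sum:
  assumes "finite S" "\<And>j. j \<in> S \<Longrightarrow> f j \<in> linf G"
  shows "\<mu> (\<lambda>x. \<Sum>j\<in>S. f j x) = (\<Sum>j\<in>S. \<mu> (f j))"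
  using assms
proof (induction S rule: finite_induct)
  case empty
  have "\<mu> (\<lambda>x. 0 * 1) = 0 * \<mu> (\<lambda>_. 1)" by (rule mean_scale[OF linf_const])
  then show ?case by simp
next
  case (insert a S)
  then show ?case by (simp add: mean_add linf_sum)
qed

lemma mean_measure_left_translate:
  "g \<in> carrier G \<Longrightarrow> mean_measure \<mu> {x. inv g \<otimes> x \<in> X} = mean_measure \<mu> X"
  unfolding mean_measure_def using mean_left_translate[OF linf_indicator] by simp

lemma sum_mean_measure_disjoint_le_one:
  assumes "finite S" "\<And>i j. i \<in> S \<Longrightarrow> j \<in> S \<Longrightarrow> i \<noteq> j \<Longrightarrow> A i \<inter> A j \<inter> carrier G = {}"
  shows "(\<Sum>j\<in>S. mean_measure \<mu> (A j)) \<le> 1"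
proof -
  have "(\<Sum>j\<in>S. mean_measure \<mu> (A j)) = \<mu> (\<lambda>x. \<Sum>j\<in>S. if x \<in> A j then 1 else 0)"
    unfolding mean_measure_def using mean_sum[OF assms(1) linf_indicator] by simp
  also have "\<dots> \<le> \<mu> (\<lambda>_. 1)"
  proof (rule mean_mono[OF linf_sum[OF assms(1) linf_indicator]])
    fix x assume "x \<in> carrier G"
    then have "card (S \<inter> {j. x \<in> A j}) \<le> 1"
      using assms by (auto simp: card_le_Suc0_iff_eq)
    then show "(\<Sum>j\<in>S. if x \<in> A j then 1 else 0) \<le> (1::real)"
      using assms(1) by (simp flip: of_bool_def)
  qed (rule linf_const)
  finally show ?thesis by (simp add: mean_one)
qed

lemma card_mult_mean_measure_le_one:
  assumes "finite S" "\<And>j. j \<in> S \<Longrightarrow> g j \<in> carrier G"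
    and "\<And>i j. i \<in> S \<Longrightarrow> j \<in> S \<Longrightarrow> i \<noteq> j \<Longrightarrow>
      {x. inv (g i) \<otimes> x \<in> X} \<inter> {x. inv (g j) \<otimes> x \<in> X} \<inter> carrier G = {}"
  shows "real (card S) * mean_measure \<mu> X \<le> 1"
proof -
  have "real (card S) * mean_measure \<mu> X = (\<Sum>j\<in>S. mean_measure \<mu> {x. inv (g j) \<otimes> x \<in> X})"
    using mean_measure_left_translate assms(2) by simp
  also have "\<dots> \<le> 1" by (rule sum_mean_measure_disjoint_le_one[OF assms(1,3)])
  finally show ?thesis .
qed

end

theorem lemma5p4:
  fixes G (structure) and \<mu> :: "('a \<Rightarrow> real) \<Rightarrow> real" and X :: "'a set" and m :: nat
  assumes "group G"
    and "left_invariant_mean G \<mu>"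
    and "X \<subseteq> carrier G"
    and "\<forall>x\<in>X. inv x \<in> X"
    and "\<one> \<in> X"
    and "m \<ge> 1"
    and "mean_measure \<mu> X \<ge> 1 / real m"
  shows "generate G X = set_pow G X (3 * m - 1)"
proof (rule ccontr)
  interpret group G by fact
  assume "generate G X \<noteq> set_pow G X (3 * m - 1)"
  then have "set_pow G X (3 * m - 1) \<noteq> set_pow G X (Suc (3 * m - 1))"
    using generate_eq_set_pow_if_stable assms(3-5) by blast
  then obtain g where g: "\<And>j. j \<le> m \<Longrightarrow> g j \<in> set_pow G X (3 * j)"
    and g_new: "\<And>j. 0 < j \<Longrightarrow> j \<le> m \<Longrightarrow> g j \<notin> set_pow G X (3 * j - 1)"
    by (rule set_pow_escaping_elements[OF assms(5)]) blast
  have "real (card {..m}) * mean_measure \<mu> X \<le> 1"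
  proof (rule card_mult_mean_measure_le_one[OF assms(2)])
    show "g j \<in> carrier G" if "j \<in> {..m}" for j
      using g that set_pow_closed[OF assms(3)] by blast
    show "{x. inv (g i) \<otimes> x \<in> X} \<inter> {x. inv (g j) \<otimes> x \<in> X} \<inter> carrier G = {}"
      if "i \<in> {..m}" "j \<in> {..m}" "i \<noteq> j" for i j
      using escaping_left_translates_disjoint[OF assms(3-5) g g_new] that by simp
  qed simp
  moreover have "1 < real (m + 1) * (1 / real m)" using assms(6) by (simp add: field_simps)
  ultimately show False using mult_left_mono[OF assms(7), of "real (m + 1)"] by simp
qed

end
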